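(* Let $q>0$ and $r\ge 0$ be real numbers. For every integer $n\ge 0$, $$B_n^q(r)=\sum_{k=0}^{n}(-1)^k\,\frac{k!}{k+1}\,W(n,k),$$ where $B_n^q(r)$ and $W(n,k)=W_{q,r}(n,k)$ are as defined in the context.
   Context: The Bernoulli polynomials with a $q$ parameter $B_n^q(r)$ are defined by the formal power series identity in $t$ $$\sum_{n=0}^{\infty}B_n^q(r)\frac{t^n}{n!}=\frac{q\,e^{rt}}{1-e^{qt}}\sum_{k=1}^{\infty}\left(\frac{1-e^{qt}}{q}\right)^k\frac{1}{k}.$$ The $r$-Whitney numbers of the second kind $W(n,k)=W_{q,r}(n,k)$, $0\le k\le n$, are defined by the polynomial identity in $x$: $(qx+r)^n=\sum_{k=0}^n q^k\,W(n,k)\,(x)_k$, where $(x)_k=x(x-1)\cdots(x-k+1)$ is the falling factorial (with $(x)_0=1$). Equivalently, $\sum_{n\ge k}W(n,k)\frac{t^n}{n!}=\frac{e^{rt}}{k!}\left(\frac{e^{qt}-1}{q}\right)^k$. *)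

theory Defs
  imports "HOL-Computational_Algebra.Formal_Power_Series"
begin

definition bq_u :: "real \<Rightarrow> real fps" where
  "bq_u q = fps_const (1 / q) * (1 - fps_exp q)"

text \<open>The formal series sum over k from 1 of u^k / k; since u has zero constant
  term, u^k contributes nothing to the coefficient of t^n when k > n, so the
  formal infinite sum is given coefficientwise by a finite sum.\<close>
definition bq_logsum :: "real \<Rightarrow> real fps" where
  "bq_logsum q = Abs_fps (\<lambda>n. \<Sum>k=1..n. fps_nth (bq_u q ^ k) n / real k)"

definition bernoulli_q_gf :: "real \<Rightarrow> real \<Rightarrow> real fps" where
  "bernoulli_q_gf q r = fps_const q * fps_exp r * bq_logsum q / (1 - fps_exp q)"

definition bernoulli_q :: "real \<Rightarrow> nat \<Rightarrow> real \<Rightarrow> real" where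
  "bernoulli_q q n r = fact n * fps_nth (bernoulli_q_gf q r) n"

definition whitney2 :: "real \<Rightarrow> real \<Rightarrow> nat \<Rightarrow> nat \<Rightarrow> real" where
  "whitney2 q r n k = fact n *
     fps_nth (fps_exp r * fps_const (1 / fact k) * (fps_const (1 / q) * (fps_exp q - 1)) ^ k) n"

end

theory Submission
  imports Defs
begin

text \<open>Write \<open>u = (1 - e\<^sup>q\<^sup>t)/q\<close>. Since \<open>q u = 1 - e\<^sup>q\<^sup>t\<close>, the prefactor of the generating
  function cancels one factor \<open>u\<close> of the logarithmic series, leaving
  \<open>e\<^sup>r\<^sup>t \<Sum>\<^sub>k u\<^sup>k/(k+1)\<close>, the composition of \<open>\<Sum>\<^sub>k x\<^sup>k/(k+1)\<close> with \<open>u\<close>. As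
  \<open>u\<^sup>k = (-1)\<^sup>k ((e\<^sup>q\<^sup>t - 1)/q)\<^sup>k\<close>, the series \<open>e\<^sup>r\<^sup>t u\<^sup>k\<close> is \<open>(-1)\<^sup>k k!\<close> times the
  generating function of \<open>W(\<cdot>,k)\<close>; comparing coefficients of \<open>t\<^sup>n\<close> gives the formula.\<close>

unbundle fps_syntax

lemma fps_mult_compose_nth:
  fixes a b h :: "'a::comm_ring_1 fps"
  assumes b0: "b $ 0 = 0"
  shows "(h * (a oo b)) $ n = (\<Sum>i=0..n. a $ i * (h * b ^ i) $ n)"
proof -
  have "(h * (a oo b)) $ n = (\<Sum>m=0..n. h $ m * (\<Sum>i=0..n-m. a $ i * (b ^ i) $ (n - m)))"
    by (simp add: fps_mult_nth fps_compose_nth)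
  also have "\<dots> = (\<Sum>m=0..n. h $ m * (\<Sum>i=0..n. a $ i * (b ^ i) $ (n - m)))"
    using startsby_zero_power_prefix[OF b0]
    by (intro sum.cong refl arg_cong[where f = "(*) _"] sum.mono_neutral_left) auto
  also have "\<dots> = (\<Sum>i=0..n. a $ i * (\<Sum>m=0..n. h $ m * (b ^ i) $ (n - m)))"
    unfolding sum_distrib_left by (subst sum.swap) (simp add: mult.left_commute)
  also have "\<dots> = (\<Sum>i=0..n. a $ i * (h * b ^ i) $ n)"
    by (simp add: fps_mult_nth)
  finally show ?thesis .
qed

lemma fps_inverse_nat_eq_fps_X_times:
  "Abs_fps (\<lambda>k. 1 / of_nat k :: 'a::field) = fps_X * Abs_fps (\<lambda>j. 1 / of_nat (Suc j))"
  by (rule fps_ext) simp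

lemma bq_u_nth_0: "bq_u q $ 0 = 0"
  by (simp add: bq_u_def)

lemma fps_const_times_bq_u:
  "q \<noteq> 0 \<Longrightarrow> fps_const q * bq_u q = 1 - fps_exp q"
  by (simp add: bq_u_def mult.assoc[symmetric] fps_const_mult[symmetric])

text \<open>The summand \<open>k = 0\<close> of the composition vanishes because \<open>1 / 0 = 0\<close>.\<close>

lemma bq_logsum_eq_compose:
  "bq_logsum q = Abs_fps (\<lambda>k. 1 / of_nat k) oo bq_u q"
  by (rule fps_ext) (simp add: bq_logsum_def fps_compose_nth sum.atLeast_Suc_atMost ac_simps)

lemma bq_logsum_eq_bq_u_times:
  "bq_logsum q = bq_u q * (Abs_fps (\<lambda>j. 1 / of_nat (Suc j)) oo bq_u q)"
  unfolding bq_logsum_eq_compose fps_inverse_nat_eq_fps_X_times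
  by (simp add: fps_compose_mult_distrib bq_u_nth_0)

lemma bernoulli_q_gf_eq:
  assumes "q \<noteq> 0"
  shows "bernoulli_q_gf q r = fps_exp r * (Abs_fps (\<lambda>j. 1 / of_nat (Suc j)) oo bq_u q)"
proof -
  define A :: "real fps" where "A = Abs_fps (\<lambda>j. 1 / of_nat (Suc j)) oo bq_u q"
  have "(1 - fps_exp q) $ 1 \<noteq> (0 :: real fps) $ 1"
    using assms by simp
  then have nonzero: "1 - fps_exp q \<noteq> (0 :: real fps)"
    by metis
  have numerator: "fps_const q * fps_exp r * bq_logsum q = fps_exp r * A * (1 - fps_exp q)"
    unfolding A_def bq_logsum_eq_bq_u_times fps_const_times_bq_u[OF assms, symmetric]
    by (simp only: ac_simps)
  show ?thesis
    unfolding bernoulli_q_gf_def numerator A_def[symmetric]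
    using nonzero by (rule fps_divide_times_eq)
qed

lemma fps_exp_times_bq_u_power_nth:
  "(fps_exp r * bq_u q ^ k) $ n = (-1) ^ k * fact k / fact n * whitney2 q r n k"
proof -
  define v where "v = fps_const (1 / q) * (fps_exp q - 1)"
  have "bq_u q = fps_const (-1) * v"
    by (simp add: bq_u_def v_def algebra_simps flip: fps_const_neg fps_const_1_eq_1)
  then have "fps_exp r * bq_u q ^ k = fps_const ((-1) ^ k) * (fps_exp r * v ^ k)"
    by (simp only: power_mult_distrib fps_const_power mult.left_commute)
  then have power_nth: "(fps_exp r * bq_u q ^ k) $ n = (-1) ^ k * (fps_exp r * v ^ k) $ n"
    by (simp only: fps_mult_left_const_nth)
  have "fps_exp r * fps_const (1 / fact k) * v ^ k = fps_const (1 / fact k) * (fps_exp r * v ^ k)"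
    by (simp only: ac_simps)
  then have whitney: "whitney2 q r n k = fact n * (1 / fact k * (fps_exp r * v ^ k) $ n)"
    unfolding whitney2_def v_def[symmetric] by (simp only: fps_mult_left_const_nth)
  show ?thesis
    by (simp add: power_nth whitney)
qed

theorem mainTheorem1:
  fixes q r :: real and n :: nat
  assumes "q > 0" and "r \<ge> 0"
  shows "bernoulli_q q n r =
    (\<Sum>k=0..n. (-1) ^ k * (fact k / real (k + 1)) * whitney2 q r n k)"
proof -
  have "bernoulli_q q n r = fact n * (\<Sum>k=0..n. (fps_exp r * bq_u q ^ k) $ n / real (k + 1))"
    using assms(1)
    by (simp add: bernoulli_q_def bernoulli_q_gf_eq fps_mult_compose_nth bq_u_nth_0)
  also have "\<dots> = (\<Sum>k=0..n. (-1) ^ k * (fact k / real (k + 1)) * whitney2 q r n k)"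
    by (simp add: fps_exp_times_bq_u_power_nth sum_distrib_left)
  finally show ?thesis .
qed

end
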